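(* Fix an integer $n\ge 0$ and $\mathbb K\in\{\mathbb R,\mathbb C\}$. Let $\mathcal B^0\supset\mathcal B^1\supset\cdots\supset\mathcal B^{n+1}$ be linear subspaces and let $\mathcal L=\mathcal L_0,\dots,\mathcal L_n$, $\mathcal L(\epsilon,\cdot)$ ($\epsilon\in(0,1)$) be linear operators satisfying conditions (I), (II), (IV) of the context. Assume also: (a) each $\mathcal B^k$ is a Banach space; (b) $\nu$ is a bounded linear functional on $\mathcal B^0$; $\mathcal L_j$ is bounded $\mathcal B^i\to\mathcal B^{i-j}$ and $\sup_{\epsilon}\|\tilde{\mathcal L}_j(\epsilon,\cdot)\|_{\mathcal B^i\to\mathcal B^{i-j}}<+\infty$ for $j=0,\dots,n$ and $i=j,\dots,n+1$; $\sup_\epsilon\|g(\epsilon,\cdot)\|_{\mathcal B^i}<+\infty$ for $i=0,\dots,n+1$; $\mathcal R_\lambda$ is bounded $\mathcal B^1\to\mathcal B^0$ and bounded on $\mathcal B^i$ for $i=1,\dots,n+1$; and $\mathcal R_\lambda:\mathcal B^1\to\mathcal B^0$ is weak bounded; (c) $\lim_{\epsilon\to0}\|\tilde{\mathcal L}_j(\epsilon,\cdot)\|_{\mathcal B^{i+1}\to\mathcal B^{i-j}}=0$ for each $j=0,\dots,n$ and $i=j,\dots,n$. Then $\|\tilde g_n(\epsilon,\cdot)\|_{\mathcal B^0}\to0$ as $\epsilon\to0$. In particular, $\|\tilde g_k(\epsilon,\cdot)\|_{\mathcal B^i}\to0$ for $k,i\ge0$ with $k+i\le n$, and $\sup_{\epsilon}\|\tilde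 g_k(\epsilon,\cdot)\|_{\mathcal B^{n+1-k}}<\infty$ for $k=0,\dots,n$.
   Context: Conditions. (I) For each $j=0,\dots,n$ and $i=j,\dots,n$, $\mathcal L_j$ maps $\mathcal B^i$ linearly into $\mathcal B^{i-j}$. (II) $\mathcal L:\mathcal B^0\to\mathcal B^0$ decomposes as $\mathcal L=\lambda(h\otimes\nu)+\mathcal R$ with $(\lambda,h,\nu)\in\mathbb K\times\mathcal B^{n+1}\times(\mathcal B^0)^*$ ($(\mathcal B^0)^*$ = linear functionals), $\lambda\neq0$, $\nu\circ\mathcal L=\lambda\nu$, $\mathcal Lh=\lambda h$, $\nu(h)=1$, where $(h\otimes\nu)f=\nu(f)h$; and there is a linear subspace $\mathcal D^0$ with $\mathcal B^1\subset\mathcal D^0\subset\mathcal B^0$ such that every $f\in\mathcal D^0$ has exactly one $g\in\mathcal B^0$ with $(\mathcal R-\lambda\mathcal I)g=f$; this inverse $\mathcal R_\lambda:\mathcal D^0\to\mathcal B^0$ satisfies $\mathcal R_\lambda\mathcal B^i\subset\mathcal B^i$ for $1\le i\le n+1$. (IV) For each $\epsilon\in(0,1)$, $\mathcal L(\epsilon,\cdot)$ maps $\mathcal B^{n+1}$ into $\mathcal B^0$ and there are $\lambda(\epsilon)\in\mathbb K$, $h(\epsilon,\cdot)\in\mathcal B^{n+1}$ with $\mathcal L(\epsilon,h(\epsilon,\cdot))=\lambda(\epsilon)h(\epsilon,\cdot)$ and $\nu(h(\epsilon,\cdot))\ne0$. Notation. $\tilde{\mathcal L}_j(\epsilon,\cdot):=(\mathcal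 L(\epsilon,\cdot)-\mathcal L-\sum_{i=1}^j\mathcal L_i\epsilon^i)/\epsilon^j$; $\mathcal P=h\otimes\nu$; $\mathcal S:=\mathcal R_\lambda(\mathcal I-\mathcal P)$; $g(\epsilon,\cdot):=h(\epsilon,\cdot)/\nu(h(\epsilon,\cdot))$. Coefficients: $g_0=h$ and recursively $\lambda_k=\sum_{j=1}^k\nu(\mathcal L_jg_{k-j})$, $g_k=\sum_{j=1}^k\mathcal S(\lambda_j\mathcal I-\mathcal L_j)g_{k-j}$ for $k=1,\dots,n$. Remainders: $\tilde g_k(\epsilon,\cdot):=(g(\epsilon,\cdot)-\sum_{i=0}^k g_i\epsilon^i)/\epsilon^k$ for $0\le k\le n$. An operator $\mathcal A:\mathcal B^1\to\mathcal B^0$ is weak bounded if for every $\eta>0$ there is $c(\eta)>0$ with $\|\mathcal Af\|_{\mathcal B^0}\le c(\eta)\|f\|_{\mathcal B^0}+\eta\|f\|_{\mathcal B^1}$ for all $f\in\mathcal B^1$. *)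

theory Defs
  imports Complex_Main
begin

text \<open>Abstract setting: an ambient vector space 'v over a scalar field 'k
(with 'k :: real_normed_field, i.e. R or C), scalar action scale.
Subspaces B k carry their own norms N k.\<close>

definition is_norm_on :: "('k::real_normed_field \<Rightarrow> 'v::ab_group_add \<Rightarrow> 'v) \<Rightarrow> 'v set \<Rightarrow> ('v \<Rightarrow> real) \<Rightarrow> bool" where
  "is_norm_on scale X N \<longleftrightarrow>
     (\<forall>x\<in>X. N x \<ge> 0) \<and> (\<forall>x\<in>X. N x = 0 \<longrightarrow> x = 0) \<and>
     (\<forall>x\<in>X. \<forall>y\<in>X. N (x + y) \<le> N x + N y) \<and>
     (\<forall>c. \<forall>x\<in>X. N (scale c x) = norm c * N x)"

definition banach_on :: "('k::real_normed_field \<Rightarrow> 'v::ab_group_add \<Rightarrow> 'v) \<Rightarrow> 'v set \<Rightarrow> ('v \<Rightarrow> real) \<Rightarrow> bool" where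
  "banach_on scale X N \<longleftrightarrow> module.subspace scale X \<and> is_norm_on scale X N \<and>
     (\<forall>s::nat \<Rightarrow> 'v. (\<forall>k. s k \<in> X) \<longrightarrow>
        (\<forall>e>0. \<exists>M. \<forall>m\<ge>M. \<forall>k\<ge>M. N (s m - s k) < e) \<longrightarrow>
        (\<exists>x\<in>X. (\<lambda>k. N (s k - x)) \<longlonglongrightarrow> 0))"

definition lin_on :: "('k::field \<Rightarrow> 'v::ab_group_add \<Rightarrow> 'v) \<Rightarrow> 'v set \<Rightarrow> ('v \<Rightarrow> 'v) \<Rightarrow> bool" where
  "lin_on scale X A \<longleftrightarrow> (\<forall>x\<in>X. \<forall>y\<in>X. A (x + y) = A x + A y) \<and>
     (\<forall>c. \<forall>x\<in>X. A (scale c x) = scale c (A x))"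

definition lin_fun_on :: "('k::field \<Rightarrow> 'v::ab_group_add \<Rightarrow> 'v) \<Rightarrow> 'v set \<Rightarrow> ('v \<Rightarrow> 'k) \<Rightarrow> bool" where
  "lin_fun_on scale X f \<longleftrightarrow> (\<forall>x\<in>X. \<forall>y\<in>X. f (x + y) = f x + f y) \<and>
     (\<forall>c. \<forall>x\<in>X. f (scale c x) = c * f x)"

definition maps_into :: "'v set \<Rightarrow> 'v set \<Rightarrow> ('v \<Rightarrow> 'v) \<Rightarrow> bool" where
  "maps_into X Y A \<longleftrightarrow> (\<forall>x\<in>X. A x \<in> Y)"

definition op_norm_le :: "('v \<Rightarrow> real) \<Rightarrow> 'v set \<Rightarrow> ('v \<Rightarrow> real) \<Rightarrow> ('v \<Rightarrow> 'v) \<Rightarrow> real \<Rightarrow> bool" where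
  "op_norm_le N1 X N2 A C \<longleftrightarrow> (\<forall>x\<in>X. N2 (A x) \<le> C * N1 x)"

definition bounded_op :: "('v \<Rightarrow> real) \<Rightarrow> 'v set \<Rightarrow> ('v \<Rightarrow> real) \<Rightarrow> 'v set \<Rightarrow> ('v \<Rightarrow> 'v) \<Rightarrow> bool" where
  "bounded_op N1 X N2 Y A \<longleftrightarrow> maps_into X Y A \<and> (\<exists>C. op_norm_le N1 X N2 A C)"

definition weak_bounded :: "('v \<Rightarrow> real) \<Rightarrow> ('v \<Rightarrow> real) \<Rightarrow> 'v set \<Rightarrow> ('v \<Rightarrow> 'v) \<Rightarrow> bool" where
  "weak_bounded N0 N1 B1 A \<longleftrightarrow>
     (\<forall>\<eta>>0. \<exists>c>0. \<forall>f\<in>B1. N0 (A f) \<le> c * N0 f + \<eta> * N1 f)"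

text \<open>Remainder operator tilde L_j(eps,.), with Ls 0 = L.\<close>
definition Ltil :: "('k::real_normed_field \<Rightarrow> 'v::ab_group_add \<Rightarrow> 'v) \<Rightarrow> (real \<Rightarrow> 'v \<Rightarrow> 'v) \<Rightarrow> (nat \<Rightarrow> 'v \<Rightarrow> 'v)
     \<Rightarrow> nat \<Rightarrow> real \<Rightarrow> 'v \<Rightarrow> 'v" where
  "Ltil scale Leps Ls j \<epsilon> x = scale (of_real (1 / \<epsilon> ^ j))
      (Leps \<epsilon> x - Ls 0 x - (\<Sum>i=1..j. scale (of_real (\<epsilon> ^ i)) (Ls i x)))"

text \<open>The list [g_0, ..., g_k] of coefficients, with S the operator R_lambda (I - P).\<close>
fun glist :: "('k::real_normed_field \<Rightarrow> 'v::ab_group_add \<Rightarrow> 'v) \<Rightarrow> (nat \<Rightarrow> 'v \<Rightarrow> 'v) \<Rightarrow> ('v \<Rightarrow> 'k)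
     \<Rightarrow> ('v \<Rightarrow> 'v) \<Rightarrow> 'v \<Rightarrow> nat \<Rightarrow> 'v list" where
  "glist scale Ls \<nu> S h 0 = [h]"
| "glist scale Ls \<nu> S h (Suc k) =
     (let gs = glist scale Ls \<nu> S h k;
          lamf = (\<lambda>m. \<Sum>i=1..m. \<nu> (Ls i (gs ! (m - i))))
      in gs @ [\<Sum>j=1..Suc k. S (scale (lamf j) (gs ! (Suc k - j)) - Ls j (gs ! (Suc k - j)))])"

definition gcoef :: "('k::real_normed_field \<Rightarrow> 'v::ab_group_add \<Rightarrow> 'v) \<Rightarrow> (nat \<Rightarrow> 'v \<Rightarrow> 'v) \<Rightarrow> ('v \<Rightarrow> 'k)
     \<Rightarrow> ('v \<Rightarrow> 'v) \<Rightarrow> 'v \<Rightarrow> nat \<Rightarrow> 'v" where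
  "gcoef scale Ls \<nu> S h k = glist scale Ls \<nu> S h k ! k"

definition lamcoef :: "('k::real_normed_field \<Rightarrow> 'v::ab_group_add \<Rightarrow> 'v) \<Rightarrow> (nat \<Rightarrow> 'v \<Rightarrow> 'v) \<Rightarrow> ('v \<Rightarrow> 'k)
     \<Rightarrow> ('v \<Rightarrow> 'v) \<Rightarrow> 'v \<Rightarrow> nat \<Rightarrow> 'k" where
  "lamcoef scale Ls \<nu> S h k = (\<Sum>j=1..k. \<nu> (Ls j (gcoef scale Ls \<nu> S h (k - j))))"

definition gtil :: "('k::real_normed_field \<Rightarrow> 'v::ab_group_add \<Rightarrow> 'v) \<Rightarrow> (real \<Rightarrow> 'v) \<Rightarrow> (nat \<Rightarrow> 'v)
     \<Rightarrow> nat \<Rightarrow> real \<Rightarrow> 'v" where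
  "gtil scale g gc k \<epsilon> = scale (of_real (1 / \<epsilon> ^ k)) (g \<epsilon> - (\<Sum>i=0..k. scale (of_real (\<epsilon> ^ i)) (gc i)))"

end

theory Submission
  imports Defs
begin

text \<open>
  Inserting the expansions of \<open>g(\<epsilon>)\<close> and of
  \<open>L(\<epsilon>)\<close> into \<open>L(\<epsilon>) g(\<epsilon>) = \<lambda>(\<epsilon>) g(\<epsilon>)\<close> shows that every remainder solves a resolvent
  equation \<open>gtilde k = R\<^sub>\<lambda> (Phi k)\<close> whose right-hand side involves only the lower remainders,
  the operators \<open>L\<^sub>j\<close> and \<open>Ltilde k \<epsilon> (g(\<epsilon>))\<close>; removing the component along \<open>g(\<epsilon>)\<close>
  eliminates the unknown \<open>\<lambda>(\<epsilon>)\<close>. A strong induction on \<open>k\<close> then shows that \<open>gtilde k\<close> is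
  bounded in \<open>B^(n+1-k)\<close> and tends to zero in \<open>B^i\<close> for \<open>i \<le> n - k\<close>: each \<open>L\<^sub>j\<close> costs
  \<open>j\<close> levels of regularity, \<open>Ltilde k \<epsilon> (g(\<epsilon>))\<close> is bounded by (b) and small by (c), and
  \<open>R\<^sub>\<lambda>\<close> preserves both properties; on \<open>B^0\<close>, where it is only bounded from \<open>B^1\<close>, this
  needs weak boundedness together with the \<open>B^1\<close> bound of \<open>Phi k\<close>.
\<close>

context vector_space
begin

lemma lin_on_add: "lin_on scale X A \<Longrightarrow> x \<in> X \<Longrightarrow> y \<in> X \<Longrightarrow> A (x + y) = A x + A y"
  by (simp add: lin_on_def)

lemma lin_on_scale: "lin_on scale X A \<Longrightarrow> x \<in> X \<Longrightarrow> A (scale c x) = scale c (A x)"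
  by (simp add: lin_on_def)

lemma lin_on_diff:
  "lin_on scale X A \<Longrightarrow> subspace X \<Longrightarrow> x \<in> X \<Longrightarrow> y \<in> X \<Longrightarrow> A (x - y) = A x - A y"
  using lin_on_add[of X A x "scale (-1) y"] lin_on_scale[of X A y "-1"] subspace_neg[of X y] by simp

lemma lin_on_sum:
  assumes "lin_on scale X A" "subspace X" "\<And>a. a \<in> I \<Longrightarrow> f a \<in> X"
  shows "A (\<Sum>a\<in>I. f a) = (\<Sum>a\<in>I. A (f a))"
  using assms(3)
proof (induction I rule: infinite_finite_induct)
  case (insert a I)
  then show ?case using assms(1,2) by (simp add: lin_on_add subspace_sum)
qed (use lin_on_scale[OF assms(1) subspace_0[OF assms(2)], of 0] in simp_all)

lemma lin_on_subset: "lin_on scale X A \<Longrightarrow> Y \<subseteq> X \<Longrightarrow> lin_on scale Y A"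
  unfolding lin_on_def by blast

lemma lin_fun_on_add: "lin_fun_on scale X f \<Longrightarrow> x \<in> X \<Longrightarrow> y \<in> X \<Longrightarrow> f (x + y) = f x + f y"
  by (simp add: lin_fun_on_def)

lemma lin_fun_on_scale: "lin_fun_on scale X f \<Longrightarrow> x \<in> X \<Longrightarrow> f (scale c x) = c * f x"
  by (simp add: lin_fun_on_def)

lemma lin_fun_on_diff:
  "lin_fun_on scale X f \<Longrightarrow> subspace X \<Longrightarrow> x \<in> X \<Longrightarrow> y \<in> X \<Longrightarrow> f (x - y) = f x - f y"
  using lin_fun_on_add[of X f x "scale (-1) y"] lin_fun_on_scale[of X f y "-1"] subspace_neg[of X y]
  by simp

lemma lin_fun_on_sum:
  assumes "lin_fun_on scale X f" "subspace X" "\<And>a. a \<in> I \<Longrightarrow> g a \<in> X"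
  shows "f (\<Sum>a\<in>I. g a) = (\<Sum>a\<in>I. f (g a))"
  using assms(3)
proof (induction I rule: infinite_finite_induct)
  case (insert a I)
  then show ?case using assms(1,2) by (simp add: lin_fun_on_add subspace_sum)
qed (use lin_fun_on_scale[OF assms(1) subspace_0[OF assms(2)], of 0] in simp_all)

lemma truncation_remainder_Suc:
  assumes "s \<noteq> 0"
  shows "scale (1 / s ^ k) (F - (\<Sum>i=0..k. scale (s ^ i) (a i)))
       = scale s (a (Suc k) + scale (1 / s ^ Suc k) (F - (\<Sum>i=0..Suc k. scale (s ^ i) (a i))))"
proof -
  have "scale s (scale (1 / s ^ Suc k) (scale (s ^ Suc k) (a (Suc k)))) = scale s (a (Suc k))"
    using assms by simp
  moreover have "s * (1 / s ^ Suc k) = 1 / s ^ k"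
    using assms by simp
  ultimately show ?thesis
    by (simp add: scale_right_distrib scale_right_diff_distrib algebra_simps)
qed

end

section \<open>Families indexed by \<open>\<epsilon> \<in> (0,1)\<close>\<close>

definition normed_subspace ::
    "('k::real_normed_field \<Rightarrow> 'v::ab_group_add \<Rightarrow> 'v) \<Rightarrow> 'v set \<Rightarrow> ('v \<Rightarrow> real) \<Rightarrow> bool" where
  "normed_subspace scale X N \<longleftrightarrow> module.subspace scale X \<and> is_norm_on scale X N"

definition bounded_family :: "'v set \<Rightarrow> ('v \<Rightarrow> real) \<Rightarrow> (real \<Rightarrow> 'v) \<Rightarrow> bool" where
  "bounded_family X N f \<longleftrightarrow> (\<forall>\<epsilon>\<in>{0<..<1}. f \<epsilon> \<in> X) \<and> (\<exists>C. \<forall>\<epsilon>\<in>{0<..<1}. N (f \<epsilon>) \<le> C)"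

definition vanishing_family :: "'v set \<Rightarrow> ('v \<Rightarrow> real) \<Rightarrow> (real \<Rightarrow> 'v) \<Rightarrow> bool" where
  "vanishing_family X N f \<longleftrightarrow> (\<forall>\<epsilon>\<in>{0<..<1}. f \<epsilon> \<in> X) \<and> ((\<lambda>\<epsilon>. N (f \<epsilon>)) \<longlongrightarrow> 0) (at_right 0)"

definition unif_bounded_ops ::
    "('v \<Rightarrow> real) \<Rightarrow> 'v set \<Rightarrow> ('v \<Rightarrow> real) \<Rightarrow> 'v set \<Rightarrow> (real \<Rightarrow> 'v \<Rightarrow> 'v) \<Rightarrow> bool" where
  "unif_bounded_ops N X M Y A \<longleftrightarrow>
     (\<exists>C. \<forall>\<epsilon>\<in>{0<..<1}. maps_into X Y (A \<epsilon>) \<and> op_norm_le N X M (A \<epsilon>) C)"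

lemma eventually_in_unit_interval: "\<forall>\<^sub>F \<epsilon> in at_right 0. \<epsilon> \<in> {0<..<1::real}"
  using eventually_at_right_real[of 0 1] by simp

lemma tendsto_zero_by_approximation:
  fixes u :: "'a \<Rightarrow> real"
  assumes nonneg: "\<forall>\<^sub>F x in F. 0 \<le> u x"
    and approx: "\<And>\<eta>. \<eta> > 0 \<Longrightarrow> \<exists>v. (v \<longlongrightarrow> 0) F \<and> (\<forall>\<^sub>F x in F. u x \<le> v x + \<eta>)"
  shows "(u \<longlongrightarrow> 0) F"
proof (rule order_tendstoI)
  show "\<forall>\<^sub>F x in F. a < u x" if "a < 0" for a
    using nonneg by eventually_elim (use that in linarith)
next
  fix a :: real assume "0 < a"
  then obtain v where v: "(v \<longlongrightarrow> 0) F" "\<forall>\<^sub>F x in F. u x \<le> v x + a / 2"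
    using approx[of "a / 2"] by auto
  have "\<forall>\<^sub>F x in F. v x < a / 2"
    using order_tendstoD(2)[OF v(1), of "a / 2"] \<open>0 < a\<close> by simp
  with v(2) show "\<forall>\<^sub>F x in F. u x < a"
    by eventually_elim linarith
qed

lemma bounded_family_nonneg_bound:
  "bounded_family X N f \<Longrightarrow> \<exists>C\<ge>0. \<forall>\<epsilon>\<in>{0<..<1}. N (f \<epsilon>) \<le> C"
proof -
  assume "bounded_family X N f"
  then obtain C where "\<forall>\<epsilon>\<in>{0<..<1}. N (f \<epsilon>) \<le> C"
    by (auto simp: bounded_family_def)
  then have "\<forall>\<epsilon>\<in>{0<..<1}. N (f \<epsilon>) \<le> max C 0"
    by (auto intro: le_max_iff_disj[THEN iffD2])
  then show ?thesis by (intro exI[of _ "max C 0"]) simp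
qed

lemma bounded_family_cong:
  "(\<And>\<epsilon>. \<epsilon> \<in> {0<..<1} \<Longrightarrow> f \<epsilon> = g \<epsilon>) \<Longrightarrow> bounded_family X N f = bounded_family X N g"
  by (simp add: bounded_family_def)

lemma vanishing_family_cong:
  assumes "\<And>\<epsilon>. \<epsilon> \<in> {0<..<1} \<Longrightarrow> f \<epsilon> = g \<epsilon>"
  shows "vanishing_family X N f = vanishing_family X N g"
proof -
  have "\<forall>\<^sub>F \<epsilon> in at_right 0. N (f \<epsilon>) = N (g \<epsilon>)"
    using eventually_in_unit_interval by eventually_elim (simp add: assms)
  then show ?thesis
    unfolding vanishing_family_def using assms by (simp add: tendsto_cong)
qed

lemma unif_bounded_ops_const: "bounded_op N X M Y A \<Longrightarrow> unif_bounded_ops N X M Y (\<lambda>_. A)"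
  by (auto simp: bounded_op_def unif_bounded_ops_def)

locale normed_field_vector_space = vector_space scale
  for scale :: "'k::real_normed_field \<Rightarrow> 'v::ab_group_add \<Rightarrow> 'v"
begin

lemma normed_subspace_subspace: "normed_subspace scale X N \<Longrightarrow> subspace X"
  by (simp add: normed_subspace_def)

lemma normed_subspace_nonneg: "normed_subspace scale X N \<Longrightarrow> x \<in> X \<Longrightarrow> 0 \<le> N x"
  by (simp add: normed_subspace_def is_norm_on_def)

lemma normed_subspace_triangle:
  "normed_subspace scale X N \<Longrightarrow> x \<in> X \<Longrightarrow> y \<in> X \<Longrightarrow> N (x + y) \<le> N x + N y"
  by (simp add: normed_subspace_def is_norm_on_def)

lemma normed_subspace_scale:
  "normed_subspace scale X N \<Longrightarrow> x \<in> X \<Longrightarrow> N (scale c x) = norm c * N x"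
  by (simp add: normed_subspace_def is_norm_on_def)

lemma normed_subspace_diff:
  assumes "normed_subspace scale X N" "x \<in> X" "y \<in> X"
  shows "N (x - y) \<le> N x + N y"
  using normed_subspace_triangle[OF assms(1,2), of "scale (-1) y"]
    normed_subspace_scale[OF assms(1,3), of "-1"] assms
  by (simp add: subspace_neg normed_subspace_subspace)

lemma normed_subspace_zero: "normed_subspace scale X N \<Longrightarrow> N 0 = 0"
  using normed_subspace_scale[of X N 0 0] by (simp add: subspace_0 normed_subspace_subspace)

lemma vanishing_familyI:
  assumes "normed_subspace scale X N" "\<forall>\<epsilon>\<in>{0<..<1}. f \<epsilon> \<in> X"
    and "\<forall>\<^sub>F \<epsilon> in at_right 0. N (f \<epsilon>) \<le> v \<epsilon>" "(v \<longlongrightarrow> 0) (at_right 0)"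
  shows "vanishing_family X N f"
proof -
  have "\<forall>\<^sub>F \<epsilon> in at_right 0. 0 \<le> N (f \<epsilon>)"
    using eventually_in_unit_interval
    by eventually_elim (use assms(1,2) normed_subspace_nonneg in blast)
  then have "((\<lambda>\<epsilon>. N (f \<epsilon>)) \<longlongrightarrow> 0) (at_right 0)"
    by (rule tendsto_sandwich[OF _ assms(3) tendsto_const assms(4)])
  with assms(2) show ?thesis
    unfolding vanishing_family_def by blast
qed

lemma bounded_family_zero: "normed_subspace scale X N \<Longrightarrow> bounded_family X N (\<lambda>_. 0)"
  by (auto simp: bounded_family_def normed_subspace_zero subspace_0 normed_subspace_subspace)

lemma vanishing_family_zero: "normed_subspace scale X N \<Longrightarrow> vanishing_family X N (\<lambda>_. 0)"
  by (simp add: vanishing_family_def normed_subspace_zero subspace_0 normed_subspace_subspace)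

lemma bounded_family_add:
  assumes X: "normed_subspace scale X N" and "bounded_family X N f" "bounded_family X N g"
  shows "bounded_family X N (\<lambda>\<epsilon>. f \<epsilon> + g \<epsilon>)"
proof -
  obtain C D where "\<forall>\<epsilon>\<in>{0<..<1}. N (f \<epsilon>) \<le> C" "\<forall>\<epsilon>\<in>{0<..<1}. N (g \<epsilon>) \<le> D"
    using assms(2,3) by (auto simp: bounded_family_def)
  moreover have "N (f \<epsilon> + g \<epsilon>) \<le> N (f \<epsilon>) + N (g \<epsilon>)" if "\<epsilon> \<in> {0<..<1}" for \<epsilon>
    using that assms(2,3) normed_subspace_triangle[OF X] by (simp add: bounded_family_def)
  ultimately have "\<forall>\<epsilon>\<in>{0<..<1}. N (f \<epsilon> + g \<epsilon>) \<le> C + D"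
    by (meson add_mono order_trans)
  then show ?thesis
    using assms(2,3) subspace_add[OF normed_subspace_subspace[OF X]]
    by (auto simp: bounded_family_def)
qed

lemma bounded_family_diff:
  assumes X: "normed_subspace scale X N" and "bounded_family X N f" "bounded_family X N g"
  shows "bounded_family X N (\<lambda>\<epsilon>. f \<epsilon> - g \<epsilon>)"
proof -
  obtain C D where "\<forall>\<epsilon>\<in>{0<..<1}. N (f \<epsilon>) \<le> C" "\<forall>\<epsilon>\<in>{0<..<1}. N (g \<epsilon>) \<le> D"
    using assms(2,3) by (auto simp: bounded_family_def)
  moreover have "N (f \<epsilon> - g \<epsilon>) \<le> N (f \<epsilon>) + N (g \<epsilon>)" if "\<epsilon> \<in> {0<..<1}" for \<epsilon>
    using that assms(2,3) normed_subspace_diff[OF X] by (simp add: bounded_family_def)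
  ultimately have "\<forall>\<epsilon>\<in>{0<..<1}. N (f \<epsilon> - g \<epsilon>) \<le> C + D"
    by (meson add_mono order_trans)
  then show ?thesis
    using assms(2,3) subspace_diff[OF normed_subspace_subspace[OF X]]
    by (auto simp: bounded_family_def)
qed

lemma vanishing_family_add:
  assumes X: "normed_subspace scale X N" and f: "vanishing_family X N f" and g: "vanishing_family X N g"
  shows "vanishing_family X N (\<lambda>\<epsilon>. f \<epsilon> + g \<epsilon>)"
proof (rule vanishing_familyI[OF X])
  show "\<forall>\<epsilon>\<in>{0<..<1}. f \<epsilon> + g \<epsilon> \<in> X"
    using f g subspace_add[OF normed_subspace_subspace[OF X]] by (simp add: vanishing_family_def)
  show "\<forall>\<^sub>F \<epsilon> in at_right 0. N (f \<epsilon> + g \<epsilon>) \<le> N (f \<epsilon>) + N (g \<epsilon>)"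
    using eventually_in_unit_interval
    by eventually_elim (use f g normed_subspace_triangle[OF X] in \<open>simp add: vanishing_family_def\<close>)
  show "((\<lambda>\<epsilon>. N (f \<epsilon>) + N (g \<epsilon>)) \<longlongrightarrow> 0) (at_right 0)"
    using f g tendsto_add_zero by (auto simp: vanishing_family_def)
qed

lemma vanishing_family_diff:
  assumes X: "normed_subspace scale X N" and f: "vanishing_family X N f" and g: "vanishing_family X N g"
  shows "vanishing_family X N (\<lambda>\<epsilon>. f \<epsilon> - g \<epsilon>)"
proof (rule vanishing_familyI[OF X])
  show "\<forall>\<epsilon>\<in>{0<..<1}. f \<epsilon> - g \<epsilon> \<in> X"
    using f g subspace_diff[OF normed_subspace_subspace[OF X]] by (simp add: vanishing_family_def)
  show "\<forall>\<^sub>F \<epsilon> in at_right 0. N (f \<epsilon> - g \<epsilon>) \<le> N (f \<epsilon>) + N (g \<epsilon>)"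
    using eventually_in_unit_interval
    by eventually_elim (use f g normed_subspace_diff[OF X] in \<open>simp add: vanishing_family_def\<close>)
  show "((\<lambda>\<epsilon>. N (f \<epsilon>) + N (g \<epsilon>)) \<longlongrightarrow> 0) (at_right 0)"
    using f g tendsto_add_zero by (auto simp: vanishing_family_def)
qed

lemma bounded_family_sum:
  "normed_subspace scale X N \<Longrightarrow> (\<And>j. j \<in> J \<Longrightarrow> bounded_family X N (f j)) \<Longrightarrow>
   bounded_family X N (\<lambda>\<epsilon>. \<Sum>j\<in>J. f j \<epsilon>)"
  by (induction J rule: infinite_finite_induct) (simp_all add: bounded_family_zero bounded_family_add)

lemma vanishing_family_sum:
  "normed_subspace scale X N \<Longrightarrow> (\<And>j. j \<in> J \<Longrightarrow> vanishing_family X N (f j)) \<Longrightarrow>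
   vanishing_family X N (\<lambda>\<epsilon>. \<Sum>j\<in>J. f j \<epsilon>)"
  by (induction J rule: infinite_finite_induct) (simp_all add: vanishing_family_zero vanishing_family_add)

lemma bounded_family_apply:
  assumes X: "normed_subspace scale X N" and A: "unif_bounded_ops N X M Y A"
    and f: "bounded_family X N f"
  shows "bounded_family Y M (\<lambda>\<epsilon>. A \<epsilon> (f \<epsilon>))"
proof -
  obtain C where C: "\<forall>\<epsilon>\<in>{0<..<1}. maps_into X Y (A \<epsilon>) \<and> op_norm_le N X M (A \<epsilon>) C"
    using A by (auto simp: unif_bounded_ops_def)
  obtain D where D: "D \<ge> 0" "\<forall>\<epsilon>\<in>{0<..<1}. N (f \<epsilon>) \<le> D"
    using bounded_family_nonneg_bound[OF f] by blast
  have fX: "\<forall>\<epsilon>\<in>{0<..<1}. f \<epsilon> \<in> X"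
    using f by (simp add: bounded_family_def)
  have "M (A \<epsilon> (f \<epsilon>)) \<le> \<bar>C\<bar> * D" if \<epsilon>: "\<epsilon> \<in> {0<..<1}" for \<epsilon>
  proof -
    have "M (A \<epsilon> (f \<epsilon>)) \<le> C * N (f \<epsilon>)"
      using C fX \<epsilon> by (simp add: op_norm_le_def)
    also have "\<dots> \<le> \<bar>C\<bar> * N (f \<epsilon>)"
      using normed_subspace_nonneg[OF X] fX \<epsilon> by (intro mult_right_mono) auto
    also have "\<dots> \<le> \<bar>C\<bar> * D"
      using D \<epsilon> by (intro mult_left_mono) auto
    finally show ?thesis .
  qed
  then have "\<forall>\<epsilon>\<in>{0<..<1}. M (A \<epsilon> (f \<epsilon>)) \<le> \<bar>C\<bar> * D"
    by blast
  with C fX show ?thesis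
    unfolding bounded_family_def maps_into_def by blast
qed

lemma vanishing_family_apply:
  assumes Y: "normed_subspace scale Y M" and A: "unif_bounded_ops N X M Y A"
    and f: "vanishing_family X N f"
  shows "vanishing_family Y M (\<lambda>\<epsilon>. A \<epsilon> (f \<epsilon>))"
proof -
  obtain C where C: "\<forall>\<epsilon>\<in>{0<..<1}. maps_into X Y (A \<epsilon>) \<and> op_norm_le N X M (A \<epsilon>) C"
    using A by (auto simp: unif_bounded_ops_def)
  have fX: "\<forall>\<epsilon>\<in>{0<..<1}. f \<epsilon> \<in> X"
    using f by (simp add: vanishing_family_def)
  show ?thesis
  proof (rule vanishing_familyI[OF Y])
    show "\<forall>\<epsilon>\<in>{0<..<1}. A \<epsilon> (f \<epsilon>) \<in> Y"
      using C fX by (simp add: maps_into_def)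
    show "\<forall>\<^sub>F \<epsilon> in at_right 0. M (A \<epsilon> (f \<epsilon>)) \<le> C * N (f \<epsilon>)"
      using eventually_in_unit_interval by eventually_elim (use C fX in \<open>simp add: op_norm_le_def\<close>)
    show "((\<lambda>\<epsilon>. C * N (f \<epsilon>)) \<longlongrightarrow> 0) (at_right 0)"
      using f tendsto_mult_right_zero by (auto simp: vanishing_family_def)
  qed
qed

lemma unif_bounded_ops_scale:
  "normed_subspace scale X N \<Longrightarrow> unif_bounded_ops N X N X (\<lambda>_. scale c)"
  unfolding unif_bounded_ops_def maps_into_def op_norm_le_def
  by (auto simp: normed_subspace_scale subspace_scale normed_subspace_subspace)

lemma bounded_family_scale:
  "normed_subspace scale X N \<Longrightarrow> bounded_family X N f \<Longrightarrow> bounded_family X N (\<lambda>\<epsilon>. scale c (f \<epsilon>))"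
  using bounded_family_apply[OF _ unif_bounded_ops_scale] by blast

lemma vanishing_family_scale:
  "normed_subspace scale X N \<Longrightarrow> vanishing_family X N f \<Longrightarrow> vanishing_family X N (\<lambda>\<epsilon>. scale c (f \<epsilon>))"
  using vanishing_family_apply[OF _ unif_bounded_ops_scale] by blast

lemma bounded_family_scale_functional:
  assumes X: "normed_subspace scale X N" and Y: "normed_subspace scale Y M"
    and \<phi>: "\<exists>C. \<forall>x\<in>X. norm (\<phi> x) \<le> C * N x"
    and f: "bounded_family X N f" and g: "bounded_family Y M g"
  shows "bounded_family Y M (\<lambda>\<epsilon>. scale (\<phi> (f \<epsilon>)) (g \<epsilon>))"
proof -
  obtain C where C: "\<forall>x\<in>X. norm (\<phi> x) \<le> C * N x"
    using \<phi> by blast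
  obtain D E where D: "D \<ge> 0" "\<forall>\<epsilon>\<in>{0<..<1}. N (f \<epsilon>) \<le> D"
    and E: "E \<ge> 0" "\<forall>\<epsilon>\<in>{0<..<1}. M (g \<epsilon>) \<le> E"
    using bounded_family_nonneg_bound f g by metis
  have fX: "\<forall>\<epsilon>\<in>{0<..<1}. f \<epsilon> \<in> X" and gY: "\<forall>\<epsilon>\<in>{0<..<1}. g \<epsilon> \<in> Y"
    using f g by (auto simp: bounded_family_def)
  have "M (scale (\<phi> (f \<epsilon>)) (g \<epsilon>)) \<le> (\<bar>C\<bar> * D) * E" if \<epsilon>: "\<epsilon> \<in> {0<..<1}" for \<epsilon>
  proof -
    have "norm (\<phi> (f \<epsilon>)) \<le> \<bar>C\<bar> * D"
      using C D fX \<epsilon> normed_subspace_nonneg[OF X]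
      by (meson abs_ge_self abs_ge_zero mult_mono order_trans)
    then have "norm (\<phi> (f \<epsilon>)) * M (g \<epsilon>) \<le> (\<bar>C\<bar> * D) * E"
      using D E gY \<epsilon> normed_subspace_nonneg[OF Y] by (intro mult_mono) auto
    then show ?thesis
      using normed_subspace_scale[OF Y] gY \<epsilon> by simp
  qed
  then have "\<forall>\<epsilon>\<in>{0<..<1}. M (scale (\<phi> (f \<epsilon>)) (g \<epsilon>)) \<le> (\<bar>C\<bar> * D) * E"
    by blast
  with gY show ?thesis
    using subspace_scale[OF normed_subspace_subspace[OF Y]] unfolding bounded_family_def by blast
qed

lemma vanishing_family_scale_functional:
  assumes Y: "normed_subspace scale Y M"
    and \<phi>: "\<exists>C. \<forall>x\<in>X. norm (\<phi> x) \<le> C * N x"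
    and f: "vanishing_family X N f" and g: "bounded_family Y M g"
  shows "vanishing_family Y M (\<lambda>\<epsilon>. scale (\<phi> (f \<epsilon>)) (g \<epsilon>))"
proof -
  obtain C where C: "\<forall>x\<in>X. norm (\<phi> x) \<le> C * N x"
    using \<phi> by blast
  obtain E where E: "E \<ge> 0" "\<forall>\<epsilon>\<in>{0<..<1}. M (g \<epsilon>) \<le> E"
    using bounded_family_nonneg_bound g by metis
  have fX: "\<forall>\<epsilon>\<in>{0<..<1}. f \<epsilon> \<in> X" and gY: "\<forall>\<epsilon>\<in>{0<..<1}. g \<epsilon> \<in> Y"
    using f g by (auto simp: bounded_family_def vanishing_family_def)
  show ?thesis
  proof (rule vanishing_familyI[OF Y])
    show "\<forall>\<epsilon>\<in>{0<..<1}. scale (\<phi> (f \<epsilon>)) (g \<epsilon>) \<in> Y"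
      using gY subspace_scale[OF normed_subspace_subspace[OF Y]] by blast
    show "\<forall>\<^sub>F \<epsilon> in at_right 0. M (scale (\<phi> (f \<epsilon>)) (g \<epsilon>)) \<le> (C * N (f \<epsilon>)) * E"
      using eventually_in_unit_interval
    proof eventually_elim
      case (elim \<epsilon>)
      have "0 \<le> C * N (f \<epsilon>)"
        using C fX elim by (meson norm_ge_zero order_trans)
      then have "norm (\<phi> (f \<epsilon>)) * M (g \<epsilon>) \<le> (C * N (f \<epsilon>)) * E"
        using C E fX gY elim normed_subspace_nonneg[OF Y] by (intro mult_mono) auto
      then show ?case
        using normed_subspace_scale[OF Y] gY elim by simp
    qed
    show "((\<lambda>\<epsilon>. (C * N (f \<epsilon>)) * E) \<longlongrightarrow> 0) (at_right 0)"
      using f by (auto simp: vanishing_family_def intro: tendsto_mult_left_zero tendsto_mult_right_zero)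
  qed
qed

lemma vanishing_family_apply_small:
  assumes Y: "normed_subspace scale Y M" and A: "\<forall>\<epsilon>\<in>{0<..<1}. maps_into X Y (A \<epsilon>)"
    and small: "\<And>\<eta>. \<eta> > 0 \<Longrightarrow> \<forall>\<^sub>F \<epsilon> in at_right 0. op_norm_le N X M (A \<epsilon>) \<eta>"
    and f: "bounded_family X N f"
  shows "vanishing_family Y M (\<lambda>\<epsilon>. A \<epsilon> (f \<epsilon>))"
proof -
  obtain D where D: "D \<ge> 0" "\<forall>\<epsilon>\<in>{0<..<1}. N (f \<epsilon>) \<le> D"
    using bounded_family_nonneg_bound[OF f] by blast
  have fX: "\<forall>\<epsilon>\<in>{0<..<1}. f \<epsilon> \<in> X"
    using f by (simp add: bounded_family_def)
  then have AfY: "\<forall>\<epsilon>\<in>{0<..<1}. A \<epsilon> (f \<epsilon>) \<in> Y"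
    using A by (simp add: maps_into_def)
  have "((\<lambda>\<epsilon>. M (A \<epsilon> (f \<epsilon>))) \<longlongrightarrow> 0) (at_right 0)"
  proof (rule tendsto_zero_by_approximation)
    show "\<forall>\<^sub>F \<epsilon> in at_right 0. 0 \<le> M (A \<epsilon> (f \<epsilon>))"
      using eventually_in_unit_interval by eventually_elim (use AfY normed_subspace_nonneg[OF Y] in blast)
  next
    fix \<eta> :: real assume "\<eta> > 0"
    then have \<eta>': "\<eta> / (D + 1) > 0" "\<eta> / (D + 1) * D \<le> \<eta>"
      using D by (simp_all add: field_simps)
    have "\<forall>\<^sub>F \<epsilon> in at_right 0. M (A \<epsilon> (f \<epsilon>)) \<le> 0 + \<eta>"
      using small[OF \<eta>'(1)] eventually_in_unit_interval
    proof eventually_elim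
      case (elim \<epsilon>)
      then have "M (A \<epsilon> (f \<epsilon>)) \<le> \<eta> / (D + 1) * N (f \<epsilon>)"
        using fX by (simp add: op_norm_le_def)
      also have "\<dots> \<le> \<eta> / (D + 1) * D"
        using D elim \<eta>' by (intro mult_left_mono) auto
      finally show ?case
        using \<eta>' by simp
    qed
    then show "\<exists>v. (v \<longlongrightarrow> 0) (at_right 0) \<and> (\<forall>\<^sub>F \<epsilon> in at_right 0. M (A \<epsilon> (f \<epsilon>)) \<le> v \<epsilon> + \<eta>)"
      by (intro exI[of _ "\<lambda>_. 0"]) simp
  qed
  with AfY show ?thesis
    by (simp add: vanishing_family_def)
qed

lemma vanishing_family_apply_weak_bounded:
  assumes Y: "normed_subspace scale Y N0" and A: "maps_into X1 Y A"
    and weak: "weak_bounded N0 N1 X1 A"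
    and f1: "bounded_family X1 N1 f" and f0: "vanishing_family Y N0 f"
  shows "vanishing_family Y N0 (\<lambda>\<epsilon>. A (f \<epsilon>))"
proof -
  obtain D where D: "D \<ge> 0" "\<forall>\<epsilon>\<in>{0<..<1}. N1 (f \<epsilon>) \<le> D"
    using bounded_family_nonneg_bound[OF f1] by blast
  have fX: "\<forall>\<epsilon>\<in>{0<..<1}. f \<epsilon> \<in> X1"
    using f1 by (simp add: bounded_family_def)
  then have AfY: "\<forall>\<epsilon>\<in>{0<..<1}. A (f \<epsilon>) \<in> Y"
    using A by (simp add: maps_into_def)
  have "((\<lambda>\<epsilon>. N0 (A (f \<epsilon>))) \<longlongrightarrow> 0) (at_right 0)"
  proof (rule tendsto_zero_by_approximation)
    show "\<forall>\<^sub>F \<epsilon> in at_right 0. 0 \<le> N0 (A (f \<epsilon>))"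
      using eventually_in_unit_interval by eventually_elim (use AfY normed_subspace_nonneg[OF Y] in blast)
  next
    fix \<eta> :: real assume "\<eta> > 0"
    then have \<eta>': "\<eta> / (D + 1) > 0" "\<eta> / (D + 1) * D \<le> \<eta>"
      using D by (simp_all add: field_simps)
    then obtain c where c: "\<forall>x\<in>X1. N0 (A x) \<le> c * N0 x + \<eta> / (D + 1) * N1 x"
      using weak by (auto simp: weak_bounded_def)
    have "\<forall>\<^sub>F \<epsilon> in at_right 0. N0 (A (f \<epsilon>)) \<le> c * N0 (f \<epsilon>) + \<eta>"
      using eventually_in_unit_interval
    proof eventually_elim
      case (elim \<epsilon>)
      have "N0 (A (f \<epsilon>)) \<le> c * N0 (f \<epsilon>) + \<eta> / (D + 1) * N1 (f \<epsilon>)"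
        using c fX elim by blast
      also have "\<eta> / (D + 1) * N1 (f \<epsilon>) \<le> \<eta> / (D + 1) * D"
        using D elim \<eta>' by (intro mult_left_mono) auto
      finally show ?case
        using \<eta>' by simp
    qed
    moreover have "((\<lambda>\<epsilon>. c * N0 (f \<epsilon>)) \<longlongrightarrow> 0) (at_right 0)"
      using f0 tendsto_mult_right_zero by (auto simp: vanishing_family_def)
    ultimately show "\<exists>v. (v \<longlongrightarrow> 0) (at_right 0) \<and> (\<forall>\<^sub>F \<epsilon> in at_right 0. N0 (A (f \<epsilon>)) \<le> v \<epsilon> + \<eta>)"
      by blast
  qed
  with AfY show ?thesis
    by (simp add: vanishing_family_def)
qed

end

lemma length_glist: "length (glist scale Ls \<nu> S h k) = Suc k"
  by (induction k) (simp_all add: Let_def)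

locale eigenvector_perturbation = normed_field_vector_space scale
  for scale :: "'k::real_normed_field \<Rightarrow> 'v::ab_group_add \<Rightarrow> 'v" +
  fixes n :: nat and B :: "nat \<Rightarrow> 'v set" and N :: "nat \<Rightarrow> 'v \<Rightarrow> real"
    and Ls :: "nat \<Rightarrow> 'v \<Rightarrow> 'v" and Leps :: "real \<Rightarrow> 'v \<Rightarrow> 'v"
    and lam :: 'k and h :: 'v and \<nu> :: "'v \<Rightarrow> 'k"
    and D0 :: "'v set" and Rl :: "'v \<Rightarrow> 'v"
    and lameps :: "real \<Rightarrow> 'k" and heps :: "real \<Rightarrow> 'v"
  assumes B_normed: "k \<le> Suc n \<Longrightarrow> normed_subspace scale (B k) (N k)"
    and B_nested: "k \<le> n \<Longrightarrow> B (Suc k) \<subseteq> B k"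
    and Ls_lin: "j \<le> n \<Longrightarrow> j \<le> i \<Longrightarrow> i \<le> n \<Longrightarrow> lin_on scale (B i) (Ls j)"
    and L_lin: "lin_on scale (B 0) (Ls 0)"
    and lam_nz: "lam \<noteq> 0"
    and h_in: "h \<in> B (Suc n)"
    and nu_lin: "lin_fun_on scale (B 0) \<nu>"
    and nu_eig: "f \<in> B 0 \<Longrightarrow> \<nu> (Ls 0 f) = lam * \<nu> f"
    and h_eig: "Ls 0 h = scale lam h"
    and nu_h: "\<nu> h = 1"
    and D0_subspace: "subspace D0"
    and B1_D0: "B 1 \<subseteq> D0" and D0_B0: "D0 \<subseteq> B 0"
    and Rl_in: "f \<in> D0 \<Longrightarrow> Rl f \<in> B 0"
    and Rl_solves: "f \<in> D0 \<Longrightarrow> (Ls 0 (Rl f) - scale lam (scale (\<nu> (Rl f)) h)) - scale lam (Rl f) = f"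
    and Rl_unique: "f \<in> D0 \<Longrightarrow> g \<in> B 0 \<Longrightarrow>
       (Ls 0 g - scale lam (scale (\<nu> g) h)) - scale lam g = f \<Longrightarrow> g = Rl f"
    and Leps_lin: "\<epsilon> \<in> {0<..<1} \<Longrightarrow> lin_on scale (B 0) (Leps \<epsilon>)"
    and heps_in: "\<epsilon> \<in> {0<..<1} \<Longrightarrow> heps \<epsilon> \<in> B (Suc n)"
    and heps_eig: "\<epsilon> \<in> {0<..<1} \<Longrightarrow> Leps \<epsilon> (heps \<epsilon>) = scale (lameps \<epsilon>) (heps \<epsilon>)"
    and nu_heps: "\<epsilon> \<in> {0<..<1} \<Longrightarrow> \<nu> (heps \<epsilon>) \<noteq> 0"
    and nu_bdd: "\<exists>C. \<forall>x\<in>B 0. norm (\<nu> x) \<le> C * N 0 x"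
    and Ls_bdd: "j \<le> n \<Longrightarrow> i + j \<le> Suc n \<Longrightarrow> bounded_op (N (i + j)) (B (i + j)) (N i) (B i) (Ls j)"
    and Ltil_bdd: "j \<le> n \<Longrightarrow> i + j \<le> Suc n \<Longrightarrow>
       unif_bounded_ops (N (i + j)) (B (i + j)) (N i) (B i) (Ltil scale Leps Ls j)"
    and Ltil_small: "j \<le> n \<Longrightarrow> i + j \<le> n \<Longrightarrow> \<eta> > 0 \<Longrightarrow>
       \<forall>\<^sub>F \<epsilon> in at_right 0. op_norm_le (N (Suc (i + j))) (B (Suc (i + j))) (N i) (Ltil scale Leps Ls j \<epsilon>) \<eta>"
    and geps_bdd: "i \<le> Suc n \<Longrightarrow> \<exists>C. \<forall>\<epsilon>\<in>{0<..<1}. N i (scale (inverse (\<nu> (heps \<epsilon>))) (heps \<epsilon>)) \<le> C"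
    and Rl_bdd10: "bounded_op (N 1) (B 1) (N 0) (B 0) Rl"
    and Rl_bdd: "1 \<le> i \<Longrightarrow> i \<le> Suc n \<Longrightarrow> bounded_op (N i) (B i) (N i) (B i) Rl"
    and Rl_weak: "weak_bounded (N 0) (N 1) (B 1) Rl"
begin

lemma B_subspace: "k \<le> Suc n \<Longrightarrow> subspace (B k)"
  using B_normed normed_subspace_subspace by blast

lemma B_antimono: "i \<le> k \<Longrightarrow> k \<le> Suc n \<Longrightarrow> B k \<subseteq> B i"
proof (induction k)
  case (Suc k)
  then show ?case
    using B_nested[of k] by (cases "i = Suc k") auto
qed simp

lemma B_antimonoD: "x \<in> B k \<Longrightarrow> i \<le> k \<Longrightarrow> k \<le> Suc n \<Longrightarrow> x \<in> B i"
  using B_antimono by blast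

lemma h_B: "i \<le> Suc n \<Longrightarrow> h \<in> B i"
  using h_in B_antimonoD by blast

lemma lin_on_Ls: "j \<le> n \<Longrightarrow> j \<le> i \<Longrightarrow> i \<le> Suc n \<Longrightarrow> lin_on scale (B i) (Ls j)"
  using Ls_lin[of j i] Ls_lin[of j n] lin_on_subset B_nested[of n] by (cases "i = Suc n") auto

lemma Ls_B: "j \<le> n \<Longrightarrow> i + j \<le> Suc n \<Longrightarrow> x \<in> B (i + j) \<Longrightarrow> Ls j x \<in> B i"
  using Ls_bdd by (auto simp: bounded_op_def maps_into_def)

lemma L_B: "x \<in> B 0 \<Longrightarrow> Ls 0 x \<in> B 0"
  using Ls_B[of 0 0] by simp

subsection \<open>The reduced resolvent\<close>

definition R_minus_lam :: "'v \<Rightarrow> 'v" where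
  "R_minus_lam x = (Ls 0 x - scale lam (scale (\<nu> x) h)) - scale lam x"

lemma lin_on_R_minus_lam: "lin_on scale (B 0) R_minus_lam"
  using L_lin nu_lin
  by (auto simp: lin_on_def lin_fun_on_def R_minus_lam_def algebra_simps)

lemma R_minus_lam_Rl: "f \<in> D0 \<Longrightarrow> R_minus_lam (Rl f) = f"
  using Rl_solves by (simp add: R_minus_lam_def)

lemma Rl_eqI: "x \<in> B 0 \<Longrightarrow> R_minus_lam x \<in> D0 \<Longrightarrow> Rl (R_minus_lam x) = x"
  using Rl_unique by (simp add: R_minus_lam_def)

lemma lin_on_Rl: "lin_on scale D0 Rl"
  unfolding lin_on_def
proof (intro conjI ballI allI)
  fix x y assume "x \<in> D0" "y \<in> D0"
  then show "Rl (x + y) = Rl x + Rl y"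
    using Rl_eqI[of "Rl x + Rl y"] Rl_in lin_on_add[OF lin_on_R_minus_lam]
      subspace_add[OF D0_subspace] subspace_add[OF B_subspace[of 0]]
    by (simp add: R_minus_lam_Rl)
next
  fix c x assume "x \<in> D0"
  then show "Rl (scale c x) = scale c (Rl x)"
    using Rl_eqI[of "scale c (Rl x)"] Rl_in lin_on_scale[OF lin_on_R_minus_lam]
      subspace_scale[OF D0_subspace] subspace_scale[OF B_subspace[of 0]]
    by (simp add: R_minus_lam_Rl)
qed

lemma nu_R_minus_lam: "x \<in> B 0 \<Longrightarrow> \<nu> (R_minus_lam x) = - lam * \<nu> x"
  using nu_eig[of x] h_B[of 0] L_B[of x]
  by (simp add: R_minus_lam_def lin_fun_on_diff[OF nu_lin B_subspace] lin_fun_on_scale[OF nu_lin]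
      subspace_scale subspace_diff B_subspace nu_h)

lemma nu_Rl: "f \<in> D0 \<Longrightarrow> \<nu> (Rl f) = - \<nu> f / lam"
  using nu_R_minus_lam[OF Rl_in, of f] R_minus_lam_Rl[of f] lam_nz by (simp add: field_simps)

lemma B_D0: "1 \<le> i \<Longrightarrow> i \<le> Suc n \<Longrightarrow> f \<in> B i \<Longrightarrow> f \<in> D0"
  using B1_D0 B_antimonoD by blast

lemma Rl_B: "1 \<le> i \<Longrightarrow> i \<le> Suc n \<Longrightarrow> f \<in> B i \<Longrightarrow> Rl f \<in> B i"
  using Rl_bdd by (auto simp: bounded_op_def maps_into_def)

definition S :: "'v \<Rightarrow> 'v" where
  "S f = Rl (f - scale (\<nu> f) h)"

definition gk :: "nat \<Rightarrow> 'v" where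
  "gk = gcoef scale Ls \<nu> S h"

definition lamk :: "nat \<Rightarrow> 'k" where
  "lamk = lamcoef scale Ls \<nu> S h"

definition lam_minus_L :: "nat \<Rightarrow> 'v \<Rightarrow> 'v" where
  "lam_minus_L j x = scale (lamk j) x - Ls j x"

definition yk :: "nat \<Rightarrow> 'v" where
  "yk m = (\<Sum>j=1..m. lam_minus_L j (gk (m - j)))"

lemma glist_nth: "m \<le> k \<Longrightarrow> glist scale Ls \<nu> S h k ! m = gk m"
proof (induction k)
  case (Suc k)
  then show ?case
    by (cases "m = Suc k") (simp_all add: gk_def gcoef_def Let_def nth_append length_glist)
qed (simp add: gk_def gcoef_def)

lemma gk_0: "gk 0 = h"
  by (simp add: gk_def gcoef_def)

lemma lamk_eq: "lamk m = (\<Sum>j=1..m. \<nu> (Ls j (gk (m - j))))"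
  by (simp add: lamk_def lamcoef_def gk_def)

lemma gk_Suc: "gk (Suc k) = (\<Sum>j=1..Suc k. S (lam_minus_L j (gk (Suc k - j))))"
proof -
  let ?gs = "glist scale Ls \<nu> S h k"
  have "gk (Suc k) = (\<Sum>j=1..Suc k. S (scale (\<Sum>i=1..j. \<nu> (Ls i (?gs ! (j - i)))) (?gs ! (Suc k - j))
      - Ls j (?gs ! (Suc k - j))))"
    by (simp add: gk_def gcoef_def Let_def nth_append length_glist)
  also have "\<dots> = (\<Sum>j=1..Suc k. S (lam_minus_L j (gk (Suc k - j))))"
  proof (rule sum.cong[OF refl])
    fix j assume j: "j \<in> {1..Suc k}"
    then have "(\<Sum>i=1..j. \<nu> (Ls i (?gs ! (j - i)))) = lamk j"
      unfolding lamk_eq by (intro sum.cong) (auto simp: glist_nth)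
    with j show "S (scale (\<Sum>i=1..j. \<nu> (Ls i (?gs ! (j - i)))) (?gs ! (Suc k - j)) - Ls j (?gs ! (Suc k - j)))
        = S (lam_minus_L j (gk (Suc k - j)))"
      using glist_nth[of "Suc k - j" k] j by (auto simp: lam_minus_L_def)
  qed
  finally show ?thesis .
qed

lemma S_B: "1 \<le> i \<Longrightarrow> i \<le> Suc n \<Longrightarrow> f \<in> B i \<Longrightarrow> S f \<in> B i"
  unfolding S_def using Rl_B h_B B_subspace subspace_diff subspace_scale by metis

lemma nu_S: "f \<in> D0 \<Longrightarrow> \<nu> (S f) = 0"
proof -
  assume f: "f \<in> D0"
  have hD: "scale c h \<in> D0" for c
    using B_D0[of "Suc n"] h_in subspace_scale[OF D0_subspace] by simp
  have "\<nu> (f - scale (\<nu> f) h) = 0"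
    using f hD D0_B0 h_B[of 0]
    by (simp add: lin_fun_on_diff[OF nu_lin B_subspace] lin_fun_on_scale[OF nu_lin] nu_h subset_iff)
  then show ?thesis
    unfolding S_def using f hD by (simp add: nu_Rl subspace_diff[OF D0_subspace])
qed

lemma lam_minus_L_B: "j \<le> n \<Longrightarrow> i + j \<le> Suc n \<Longrightarrow> x \<in> B (i + j) \<Longrightarrow> lam_minus_L j x \<in> B i"
  unfolding lam_minus_L_def
  using Ls_B B_antimonoD[of x "i + j" i] B_subspace[of i] subspace_diff subspace_scale by simp

lemma lam_minus_L_B_shift:
  "1 \<le> j \<Longrightarrow> j \<le> m \<Longrightarrow> m \<le> n \<Longrightarrow> x \<in> B (Suc n - (m - j)) \<Longrightarrow> lam_minus_L j x \<in> B (Suc n - m)"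
  using lam_minus_L_B[of j "Suc n - m" x] by (simp add: Suc_diff_le)

lemma gk_B: "m \<le> n \<Longrightarrow> gk m \<in> B (Suc n - m)"
proof (induction m rule: less_induct)
  case (less m)
  show ?case
  proof (cases m)
    case 0
    then show ?thesis using h_in gk_0 by simp
  next
    case (Suc k)
    have "S (lam_minus_L j (gk (m - j))) \<in> B (Suc n - m)" if "j \<in> {1..m}" for j
      using that less by (intro S_B lam_minus_L_B_shift less.IH) auto
    then show ?thesis
      unfolding Suc gk_Suc using B_subspace[of "Suc n - Suc k"] Suc
      by (intro subspace_sum) auto
  qed
qed

lemma lam_minus_L_gk_B: "1 \<le> j \<Longrightarrow> j \<le> m \<Longrightarrow> m \<le> n \<Longrightarrow> lam_minus_L j (gk (m - j)) \<in> B (Suc n - m)"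
  using lam_minus_L_B_shift[OF _ _ _ gk_B[of "m - j"]] by simp

lemma yk_B: "m \<le> n \<Longrightarrow> yk m \<in> B (Suc n - m)"
  unfolding yk_def using B_subspace[of "Suc n - m"]
  by (intro subspace_sum) (auto intro: lam_minus_L_gk_B)

lemma nu_gk: "1 \<le> m \<Longrightarrow> m \<le> n \<Longrightarrow> \<nu> (gk m) = 0"
proof -
  assume m: "1 \<le> m" "m \<le> n"
  then obtain k where k: "m = Suc k"
    by (cases m) auto
  have a: "lam_minus_L j (gk (m - j)) \<in> B (Suc n - m)" if "j \<in> {1..m}" for j
    using that m by (intro lam_minus_L_gk_B) auto
  have "\<nu> (gk m) = (\<Sum>j=1..m. \<nu> (S (lam_minus_L j (gk (m - j)))))"
    unfolding k gk_Suc using a m B_antimonoD[of _ "Suc n - m" 0] S_B[of "Suc n - m"] k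
    by (intro lin_fun_on_sum[OF nu_lin B_subspace]) auto
  also have "\<dots> = 0"
    using a m B_D0[of "Suc n - m"] by (simp add: nu_S)
  finally show ?thesis .
qed

lemma nu_yk: "1 \<le> m \<Longrightarrow> m \<le> n \<Longrightarrow> \<nu> (yk m) = 0"
proof -
  assume m: "1 \<le> m" "m \<le> n"
  have B0: "gk (m - j) \<in> B 0" "Ls j (gk (m - j)) \<in> B 0" "lam_minus_L j (gk (m - j)) \<in> B 0"
    if "j \<in> {1..m}" for j
    using that m gk_B[of "m - j"] B_antimonoD[of _ "Suc n - (m - j)" 0] Ls_B[of j 0]
      B_antimonoD[of "gk (m - j)" "Suc n - (m - j)" j] lam_minus_L_gk_B[of j m]
      B_antimonoD[of _ "Suc n - m" 0]
    by auto
  have "(\<Sum>j=1..m. lamk j * \<nu> (gk (m - j))) = (\<Sum>j=1..m. if j = m then lamk j else 0)"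
    using m by (intro sum.cong) (auto simp: gk_0 nu_h nu_gk)
  then have "(\<Sum>j=1..m. lamk j * \<nu> (gk (m - j))) = lamk m"
    using m by simp
  moreover have "\<nu> (yk m) = (\<Sum>j=1..m. \<nu> (lam_minus_L j (gk (m - j))))"
    unfolding yk_def using B0 by (intro lin_fun_on_sum[OF nu_lin B_subspace]) auto
  moreover have "\<dots> = (\<Sum>j=1..m. lamk j * \<nu> (gk (m - j)) - \<nu> (Ls j (gk (m - j))))"
    using B0 B_subspace[of 0] unfolding lam_minus_L_def
    by (intro sum.cong) (simp_all add: lin_fun_on_diff[OF nu_lin] lin_fun_on_scale[OF nu_lin] subspace_scale)
  ultimately show ?thesis
    by (simp add: sum_subtractf lamk_eq)
qed

lemma gk_eq_Rl_yk: "1 \<le> m \<Longrightarrow> m \<le> n \<Longrightarrow> gk m = Rl (yk m)"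
proof -
  assume m: "1 \<le> m" "m \<le> n"
  then obtain k where k: "m = Suc k"
    by (cases m) auto
  define a where "a j = lam_minus_L j (gk (m - j))" for j
  have aD: "a j \<in> D0" and aB0: "a j \<in> B 0" if "j \<in> {1..m}" for j
    using that m B_D0[of "Suc n - m"] D0_B0 lam_minus_L_gk_B[of j m] unfolding a_def
    by auto
  have hD: "scale c h \<in> D0" for c
    using B_D0[of "Suc n"] h_in subspace_scale[OF D0_subspace] by simp
  have "gk m = (\<Sum>j=1..m. Rl (a j - scale (\<nu> (a j)) h))"
    unfolding k gk_Suc S_def a_def ..
  also have "\<dots> = Rl (\<Sum>j=1..m. a j - scale (\<nu> (a j)) h)"
    using aD hD by (intro lin_on_sum[OF lin_on_Rl D0_subspace, symmetric]) (simp add: subspace_diff[OF D0_subspace])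
  also have "(\<Sum>j=1..m. a j - scale (\<nu> (a j)) h) = yk m - scale (\<nu> (yk m)) h"
  proof -
    have "\<nu> (\<Sum>j=1..m. a j) = (\<Sum>j=1..m. \<nu> (a j))"
      using aB0 by (intro lin_fun_on_sum[OF nu_lin B_subspace]) auto
    then show ?thesis
      unfolding yk_def a_def[symmetric] sum_subtractf scale_sum_left[symmetric] by simp
  qed
  finally show ?thesis
    using nu_yk[OF m] by simp
qed

lemma lin_on_lam_minus_L: "j \<le> n \<Longrightarrow> j \<le> i \<Longrightarrow> i \<le> Suc n \<Longrightarrow> lin_on scale (B i) (lam_minus_L j)"
  using lin_on_Ls[of j i]
  by (simp add: lin_on_def lam_minus_L_def scale_right_distrib scale_right_diff_distrib algebra_simps)

definition geps :: "real \<Rightarrow> 'v" where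
  "geps \<epsilon> = scale (inverse (\<nu> (heps \<epsilon>))) (heps \<epsilon>)"

definition gtilde :: "nat \<Rightarrow> real \<Rightarrow> 'v" where
  "gtilde = gtil scale geps gk"

abbreviation Ltilde :: "nat \<Rightarrow> real \<Rightarrow> 'v \<Rightarrow> 'v" where
  "Ltilde \<equiv> Ltil scale Leps Ls"

lemma geps_B: "\<epsilon> \<in> {0<..<1} \<Longrightarrow> i \<le> Suc n \<Longrightarrow> geps \<epsilon> \<in> B i"
  unfolding geps_def using heps_in B_antimonoD B_subspace subspace_scale by blast

lemma nu_geps: "\<epsilon> \<in> {0<..<1} \<Longrightarrow> \<nu> (geps \<epsilon>) = 1"
  unfolding geps_def using heps_in B_antimonoD[of _ "Suc n" 0] nu_heps
  by (simp add: lin_fun_on_scale[OF nu_lin])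

lemma Leps_geps: "\<epsilon> \<in> {0<..<1} \<Longrightarrow> Leps \<epsilon> (geps \<epsilon>) = scale (lameps \<epsilon>) (geps \<epsilon>)"
  unfolding geps_def using heps_in B_antimonoD[of _ "Suc n" 0] heps_eig
  by (simp add: lin_on_scale[OF Leps_lin] mult.commute)

lemma gtilde_0: "gtilde 0 \<epsilon> = geps \<epsilon> - h"
  by (simp add: gtilde_def gtil_def gk_0)

lemma gtilde_Suc: "\<epsilon> \<noteq> 0 \<Longrightarrow> gtilde k \<epsilon> = scale (of_real \<epsilon>) (gk (Suc k) + gtilde (Suc k) \<epsilon>)"
  using truncation_remainder_Suc[of "of_real \<epsilon>" k "geps \<epsilon>" gk]
  by (simp add: gtilde_def gtil_def)

lemma Ltilde_0: "Ltilde 0 \<epsilon> x = Leps \<epsilon> x - Ls 0 x"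
  by (simp add: Ltil_def)

lemma Ltilde_Suc: "\<epsilon> \<noteq> 0 \<Longrightarrow> Ltilde m \<epsilon> x = scale (of_real \<epsilon>) (Ls (Suc m) x + Ltilde (Suc m) \<epsilon> x)"
proof -
  assume "\<epsilon> \<noteq> 0"
  have "Ltilde j \<epsilon> x = scale (1 / of_real \<epsilon> ^ j) (Leps \<epsilon> x - (\<Sum>i=0..j. scale (of_real \<epsilon> ^ i) (Ls i x)))"
    for j
    by (simp add: Ltil_def sum.atLeast_Suc_atMost diff_diff_eq)
  with \<open>\<epsilon> \<noteq> 0\<close> show ?thesis
    using truncation_remainder_Suc[of "of_real \<epsilon>" m "Leps \<epsilon> x" "\<lambda>i. Ls i x"] by simp
qed

lemma gtilde_B: "k \<le> n \<Longrightarrow> \<epsilon> \<in> {0<..<1} \<Longrightarrow> gtilde k \<epsilon> \<in> B (Suc n - k)"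
proof -
  assume a: "k \<le> n" "\<epsilon> \<in> {0<..<1}"
  have "gk i \<in> B (Suc n - k)" if "i \<le> k" for i
    using that a B_antimonoD[OF gk_B[of i], of "Suc n - k"] by simp
  then have "(\<Sum>i=0..k. scale (of_real (\<epsilon> ^ i)) (gk i)) \<in> B (Suc n - k)"
    using B_subspace[of "Suc n - k"] by (intro subspace_sum subspace_scale) auto
  with a show ?thesis
    unfolding gtilde_def gtil_def using geps_B B_subspace[of "Suc n - k"] subspace_scale subspace_diff
    by simp
qed

lemma Ltilde_B: "j \<le> n \<Longrightarrow> i + j \<le> Suc n \<Longrightarrow> \<epsilon> \<in> {0<..<1} \<Longrightarrow> x \<in> B (i + j) \<Longrightarrow> Ltilde j \<epsilon> x \<in> B i"
  using Ltil_bdd[of j i] unfolding unif_bounded_ops_def maps_into_def by blast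

subsection \<open>The remainder equation\<close>

definition Psi :: "nat \<Rightarrow> real \<Rightarrow> 'v" where
  "Psi k \<epsilon> = (\<Sum>j=1..k. lam_minus_L j (gtilde (k - j) \<epsilon>)) - Ltilde k \<epsilon> (geps \<epsilon>)"

definition Phi :: "nat \<Rightarrow> real \<Rightarrow> 'v" where
  "Phi k \<epsilon> = Psi k \<epsilon> - scale (\<nu> (Psi k \<epsilon>)) (geps \<epsilon>)"

lemma Psi_B: "k \<le> n \<Longrightarrow> \<epsilon> \<in> {0<..<1} \<Longrightarrow> Psi k \<epsilon> \<in> B (Suc n - k)"
proof -
  assume a: "k \<le> n" "\<epsilon> \<in> {0<..<1}"
  have "(\<Sum>j=1..k. lam_minus_L j (gtilde (k - j) \<epsilon>)) \<in> B (Suc n - k)"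
    using a B_subspace[of "Suc n - k"]
    by (intro subspace_sum) (auto intro!: lam_minus_L_B_shift gtilde_B)
  moreover have "Ltilde k \<epsilon> (geps \<epsilon>) \<in> B (Suc n - k)"
    using a Ltilde_B[of k "Suc n - k"] geps_B by simp
  ultimately show ?thesis
    unfolding Psi_def using B_subspace subspace_diff by simp
qed

lemma Phi_B: "k \<le> n \<Longrightarrow> \<epsilon> \<in> {0<..<1} \<Longrightarrow> Phi k \<epsilon> \<in> B (Suc n - k)"
  unfolding Phi_def using Psi_B geps_B B_subspace subspace_diff subspace_scale by simp

lemma lam_minus_L_gtilde_Suc:
  assumes j: "1 \<le> j" "j \<le> m" and m: "Suc m \<le> n" and \<epsilon>: "\<epsilon> \<in> {0<..<1}"
  shows "lam_minus_L j (gtilde (m - j) \<epsilon>)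
      = scale (of_real \<epsilon>) (lam_minus_L j (gk (Suc m - j)) + lam_minus_L j (gtilde (Suc m - j) \<epsilon>))"
proof -
  let ?i = "n - m + j"
  have idx: "Suc n - (Suc m - j) = ?i" "Suc (m - j) = Suc m - j"
    using j m by auto
  then have a: "gk (Suc m - j) \<in> B ?i" and b: "gtilde (Suc m - j) \<epsilon> \<in> B ?i"
    using j m \<epsilon> gk_B[of "Suc m - j"] gtilde_B[of "Suc m - j"] by auto
  have lin: "lin_on scale (B ?i) (lam_minus_L j)"
    using j m by (intro lin_on_lam_minus_L) auto
  have "subspace (B ?i)"
    using j m by (intro B_subspace) auto
  then have "gk (Suc m - j) + gtilde (Suc m - j) \<epsilon> \<in> B ?i"
    using a b subspace_add by blast
  moreover have "\<epsilon> \<noteq> 0"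
    using \<epsilon> by simp
  ultimately show ?thesis
    using gtilde_Suc[of \<epsilon> "m - j"] lin_on_scale[OF lin] lin_on_add[OF lin a b] by (simp add: idx)
qed

lemma Psi_Suc:
  assumes m: "Suc m \<le> n" and \<epsilon>: "\<epsilon> \<in> {0<..<1}"
  shows "Psi m \<epsilon> = scale (of_real \<epsilon>) (Psi (Suc m) \<epsilon> + yk (Suc m) - scale (lamk (Suc m)) (geps \<epsilon>))"
proof -
  define s :: 'k where "s = of_real \<epsilon>"
  define Yg where "Yg = (\<Sum>j=1..m. lam_minus_L j (gk (Suc m - j)))"
  define Yt where "Yt = (\<Sum>j=1..m. lam_minus_L j (gtilde (Suc m - j) \<epsilon>))"
  have \<epsilon>0: "\<epsilon> \<noteq> 0"
    using \<epsilon> by simp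
  have sum_m: "(\<Sum>j=1..m. lam_minus_L j (gtilde (m - j) \<epsilon>)) = scale s (Yg + Yt)"
    unfolding Yg_def Yt_def s_def using lam_minus_L_gtilde_Suc[OF _ _ m \<epsilon>]
    by (simp add: scale_sum_right[symmetric] sum.distrib)
  have yk_Suc: "yk (Suc m) = Yg + lam_minus_L (Suc m) h"
    unfolding yk_def Yg_def by (simp add: gk_0)
  have Psi_m: "Psi m \<epsilon> = scale s (Yg + Yt) - Ltilde m \<epsilon> (geps \<epsilon>)"
    unfolding Psi_def sum_m ..
  have Psi_Suc_m: "Psi (Suc m) \<epsilon> = Yt + lam_minus_L (Suc m) (gtilde 0 \<epsilon>) - Ltilde (Suc m) \<epsilon> (geps \<epsilon>)"
    unfolding Psi_def Yt_def by simp
  have lam_minus_L_gtilde_0: "lam_minus_L (Suc m) (gtilde 0 \<epsilon>)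
      = scale (lamk (Suc m)) (geps \<epsilon>) - Ls (Suc m) (geps \<epsilon>) - lam_minus_L (Suc m) h"
    using lin_on_diff[OF lin_on_lam_minus_L[of "Suc m" "Suc n"] B_subspace geps_B[OF \<epsilon>] h_in] m
    by (simp add: gtilde_0 lam_minus_L_def)
  have Ltilde_m: "Ltilde m \<epsilon> (geps \<epsilon>) = scale s (Ls (Suc m) (geps \<epsilon>) + Ltilde (Suc m) \<epsilon> (geps \<epsilon>))"
    unfolding s_def by (rule Ltilde_Suc[OF \<epsilon>0])
  show ?thesis
    unfolding Psi_m yk_Suc Psi_Suc_m lam_minus_L_gtilde_0 Ltilde_m s_def[symmetric]
    by (simp add: scale_right_distrib scale_right_diff_distrib algebra_simps)
qed

lemma Phi_Suc:
  assumes m: "Suc m \<le> n" and \<epsilon>: "\<epsilon> \<in> {0<..<1}"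
  shows "Phi m \<epsilon> = scale (of_real \<epsilon>) (Phi (Suc m) \<epsilon> + yk (Suc m))"
proof -
  define s :: 'k where "s = of_real \<epsilon>"
  have B0: "Psi (Suc m) \<epsilon> \<in> B 0" "yk (Suc m) \<in> B 0" "geps \<epsilon> \<in> B 0"
    using B_antimonoD[OF Psi_B[OF m \<epsilon>], of 0] B_antimonoD[OF yk_B[OF m], of 0] geps_B[OF \<epsilon>, of 0]
    by auto
  define X where "X = Psi (Suc m) \<epsilon> + yk (Suc m) - scale (lamk (Suc m)) (geps \<epsilon>)"
  have Psi_m: "Psi m \<epsilon> = scale s X"
    unfolding X_def s_def by (rule Psi_Suc[OF m \<epsilon>])
  have PyB: "Psi (Suc m) \<epsilon> + yk (Suc m) \<in> B 0" and cgB: "scale (lamk (Suc m)) (geps \<epsilon>) \<in> B 0"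
    using B0 B_subspace[of 0] subspace_add subspace_scale by auto
  then have "\<nu> X = \<nu> (Psi (Suc m) \<epsilon>) - lamk (Suc m)"
    unfolding X_def using B0 m \<epsilon>
    by (simp add: lin_fun_on_diff[OF nu_lin B_subspace] lin_fun_on_add[OF nu_lin]
        lin_fun_on_scale[OF nu_lin] nu_yk nu_geps)
  moreover have "X \<in> B 0"
    unfolding X_def using PyB cgB B_subspace[of 0] subspace_diff by simp
  ultimately have "Phi m \<epsilon> = scale s (X - scale (\<nu> (Psi (Suc m) \<epsilon>) - lamk (Suc m)) (geps \<epsilon>))"
    unfolding Phi_def Psi_m by (simp add: lin_fun_on_scale[OF nu_lin] scale_right_diff_distrib)
  also have "\<dots> = scale s (Phi (Suc m) \<epsilon> + yk (Suc m))"
    unfolding X_def Phi_def by (simp add: scale_left_diff_distrib algebra_simps)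
  finally show ?thesis
    unfolding s_def .
qed

lemma R_minus_lam_gtilde_0:
  assumes \<epsilon>: "\<epsilon> \<in> {0<..<1}"
  shows "R_minus_lam (gtilde 0 \<epsilon>) = Phi 0 \<epsilon>"
proof -
  have g: "geps \<epsilon> \<in> B 0" "h \<in> B 0"
    using \<epsilon> geps_B h_B by auto
  have "R_minus_lam h = - scale lam h"
    by (simp add: R_minus_lam_def h_eig nu_h)
  moreover have "R_minus_lam (geps \<epsilon>) = Ls 0 (geps \<epsilon>) - scale lam h - scale lam (geps \<epsilon>)"
    using \<epsilon> by (simp add: R_minus_lam_def nu_geps)
  ultimately have "R_minus_lam (gtilde 0 \<epsilon>) = Ls 0 (geps \<epsilon>) - scale lam (geps \<epsilon>)"
    using g lin_on_diff[OF lin_on_R_minus_lam B_subspace] by (simp add: gtilde_0)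
  also have "\<dots> = Phi 0 \<epsilon>"
  proof -
    have nu_eq: "\<nu> (Ls 0 (geps \<epsilon>) - scale (lameps \<epsilon>) (geps \<epsilon>)) = lam - lameps \<epsilon>"
      using g \<epsilon> nu_eig[of "geps \<epsilon>"] L_B[of "geps \<epsilon>"] subspace_scale[OF B_subspace[of 0]]
      by (simp add: lin_fun_on_diff[OF nu_lin B_subspace] lin_fun_on_scale[OF nu_lin] nu_geps)
    show ?thesis
      unfolding Phi_def Psi_def Ltilde_0 Leps_geps[OF \<epsilon>]
      by (simp add: nu_eq scale_left_diff_distrib algebra_simps)
  qed
  finally show ?thesis .
qed

theorem gtilde_eq_Rl_Phi: "k \<le> n \<Longrightarrow> \<epsilon> \<in> {0<..<1} \<Longrightarrow> gtilde k \<epsilon> = Rl (Phi k \<epsilon>)"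
proof (induction k)
  case 0
  then have "gtilde 0 \<epsilon> \<in> B 0" "Phi 0 \<epsilon> \<in> D0"
    using gtilde_B[of 0 \<epsilon>] B_antimonoD[of _ "Suc n" 0] Phi_B[of 0 \<epsilon>] B_D0[of "Suc n"] by auto
  then show ?case
    using Rl_eqI R_minus_lam_gtilde_0[OF 0(2)] by metis
next
  case (Suc k)
  define s :: 'k where "s = of_real \<epsilon>"
  have s: "s \<noteq> 0"
    using Suc.prems by (simp add: s_def)
  have D: "Phi k \<epsilon> \<in> D0" "yk (Suc k) \<in> D0"
    using Suc.prems B_D0[OF _ _ Phi_B[of k \<epsilon>]] B_D0[OF _ _ yk_B[of "Suc k"]] by auto
  have "gtilde (Suc k) \<epsilon> = scale (inverse s) (gtilde k \<epsilon>) - gk (Suc k)"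
    using gtilde_Suc[of \<epsilon> k] s by (simp add: s_def)
  also have "\<dots> = Rl (scale (inverse s) (Phi k \<epsilon>) - yk (Suc k))"
    using Suc D gk_eq_Rl_yk[of "Suc k"] lin_on_Rl
    by (simp add: lin_on_diff[OF _ D0_subspace] lin_on_scale subspace_scale[OF D0_subspace])
  also have "scale (inverse s) (Phi k \<epsilon>) = Phi (Suc k) \<epsilon> + yk (Suc k)"
    using Phi_Suc[of k \<epsilon>] Suc.prems s by (simp add: s_def)
  finally show ?case
    by simp
qed

subsection \<open>Estimates\<close>

abbreviation bounded_in :: "nat \<Rightarrow> (real \<Rightarrow> 'v) \<Rightarrow> bool" where
  "bounded_in i \<equiv> bounded_family (B i) (N i)"

abbreviation vanishing_in :: "nat \<Rightarrow> (real \<Rightarrow> 'v) \<Rightarrow> bool" where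
  "vanishing_in i \<equiv> vanishing_family (B i) (N i)"

lemma Ls_unif_bounded:
  "j \<le> n \<Longrightarrow> i + j \<le> Suc n \<Longrightarrow> unif_bounded_ops (N (i + j)) (B (i + j)) (N i) (B i) (\<lambda>_. Ls j)"
  using Ls_bdd unif_bounded_ops_const by blast

lemma bounded_in_geps: "i \<le> Suc n \<Longrightarrow> bounded_in i geps"
  using geps_bdd geps_B by (auto simp: bounded_family_def geps_def)

lemma bounded_in_lam_minus_L:
  "j \<le> n \<Longrightarrow> i + j \<le> Suc n \<Longrightarrow> bounded_in i F \<Longrightarrow> bounded_in (i + j) F \<Longrightarrow>
   bounded_in i (\<lambda>\<epsilon>. lam_minus_L j (F \<epsilon>))"
  unfolding lam_minus_L_def
  by (intro bounded_family_diff bounded_family_scale bounded_family_apply[OF _ Ls_unif_bounded] B_normed)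
    auto

lemma vanishing_in_lam_minus_L:
  "j \<le> n \<Longrightarrow> i + j \<le> Suc n \<Longrightarrow> vanishing_in i F \<Longrightarrow> vanishing_in (i + j) F \<Longrightarrow>
   vanishing_in i (\<lambda>\<epsilon>. lam_minus_L j (F \<epsilon>))"
  unfolding lam_minus_L_def
  by (intro vanishing_family_diff vanishing_family_scale vanishing_family_apply[OF _ Ls_unif_bounded] B_normed)
    auto

lemma bounded_in_Psi:
  assumes k: "k \<le> n" and i: "i \<le> Suc n - k"
    and gtilde: "\<And>m i. m < k \<Longrightarrow> i \<le> Suc n - m \<Longrightarrow> bounded_in i (gtilde m)"
  shows "bounded_in i (Psi k)"
proof -
  have "bounded_in i (\<lambda>\<epsilon>. lam_minus_L j (gtilde (k - j) \<epsilon>))" if "j \<in> {1..k}" for j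
    using that k i by (intro bounded_in_lam_minus_L gtilde) auto
  moreover have "bounded_in i (\<lambda>\<epsilon>. Ltilde k \<epsilon> (geps \<epsilon>))"
    using k i by (intro bounded_family_apply[OF B_normed Ltil_bdd bounded_in_geps]) auto
  ultimately show ?thesis
    unfolding Psi_def[abs_def] using k i
    by (intro bounded_family_diff bounded_family_sum B_normed) auto
qed

lemma vanishing_in_Psi:
  assumes k: "k \<le> n" and i: "i \<le> n - k"
    and gtilde: "\<And>m i. m < k \<Longrightarrow> i \<le> n - m \<Longrightarrow> vanishing_in i (gtilde m)"
  shows "vanishing_in i (Psi k)"
proof -
  have "vanishing_in i (\<lambda>\<epsilon>. lam_minus_L j (gtilde (k - j) \<epsilon>))" if "j \<in> {1..k}" for j
    using that k i by (intro vanishing_in_lam_minus_L gtilde) auto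
  moreover have "vanishing_in i (\<lambda>\<epsilon>. Ltilde k \<epsilon> (geps \<epsilon>))"
  proof (rule vanishing_family_apply_small[OF B_normed _ Ltil_small bounded_in_geps])
    have "Ltilde k \<epsilon> x \<in> B i" if "\<epsilon> \<in> {0<..<1}" "x \<in> B (Suc (i + k))" for \<epsilon> x
    proof -
      have "i + k \<le> n"
        using k i by simp
      then show ?thesis
        using that Ltilde_B[of k "Suc i" \<epsilon> x] B_nested[of i] by auto
    qed
    then show "\<forall>\<epsilon>\<in>{0<..<1}. maps_into (B (Suc (i + k))) (B i) (Ltilde k \<epsilon>)"
      by (simp add: maps_into_def)
  qed (use k i in auto)
  ultimately show ?thesis
    unfolding Psi_def[abs_def] using k i
    by (intro vanishing_family_diff vanishing_family_sum B_normed) auto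
qed

lemma bounded_in_Phi:
  "i \<le> Suc n \<Longrightarrow> bounded_in 0 (Psi k) \<Longrightarrow> bounded_in i (Psi k) \<Longrightarrow> bounded_in i (Phi k)"
  unfolding Phi_def[abs_def]
  by (intro bounded_family_diff bounded_family_scale_functional[OF B_normed B_normed nu_bdd]
      bounded_in_geps B_normed) auto

lemma vanishing_in_Phi:
  "i \<le> Suc n \<Longrightarrow> vanishing_in 0 (Psi k) \<Longrightarrow> vanishing_in i (Psi k) \<Longrightarrow> vanishing_in i (Phi k)"
  unfolding Phi_def[abs_def]
  by (intro vanishing_family_diff vanishing_family_scale_functional[OF B_normed nu_bdd]
      bounded_in_geps B_normed) auto

lemma bounded_in_Rl: "i \<le> Suc n \<Longrightarrow> bounded_in 1 F \<Longrightarrow> bounded_in i F \<Longrightarrow> bounded_in i (\<lambda>\<epsilon>. Rl (F \<epsilon>))"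
  using bounded_family_apply[OF B_normed unif_bounded_ops_const[OF Rl_bdd10]]
    bounded_family_apply[OF B_normed unif_bounded_ops_const[OF Rl_bdd]]
  by (cases "i = 0") auto

lemma vanishing_in_Rl:
  "i \<le> Suc n \<Longrightarrow> bounded_in 1 F \<Longrightarrow> vanishing_in i F \<Longrightarrow> vanishing_in i (\<lambda>\<epsilon>. Rl (F \<epsilon>))"
  using vanishing_family_apply_weak_bounded[OF B_normed _ Rl_weak] Rl_bdd10
    vanishing_family_apply[OF B_normed unif_bounded_ops_const[OF Rl_bdd]]
  by (cases "i = 0") (auto simp: bounded_op_def)

theorem gtilde_estimates:
  "k \<le> n \<Longrightarrow> (\<forall>i \<le> Suc n - k. bounded_in i (gtilde k)) \<and> (\<forall>i \<le> n - k. vanishing_in i (gtilde k))"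
proof (induction k rule: less_induct)
  case (less k)
  have Psi_bounded: "bounded_in i (Psi k)" if "i \<le> Suc n - k" for i
    using less that by (intro bounded_in_Psi) auto
  have Psi_vanishing: "vanishing_in i (Psi k)" if "i \<le> n - k" for i
    using less that by (intro vanishing_in_Psi) auto
  have Phi_bounded: "bounded_in i (Phi k)" if "i \<le> Suc n - k" for i
    using that by (intro bounded_in_Phi Psi_bounded) auto
  have Phi_vanishing: "vanishing_in i (Phi k)" if "i \<le> n - k" for i
    using that by (intro vanishing_in_Phi Psi_vanishing) auto
  have "bounded_family X M (gtilde k) = bounded_family X M (\<lambda>\<epsilon>. Rl (Phi k \<epsilon>))"
    and "vanishing_family X M (gtilde k) = vanishing_family X M (\<lambda>\<epsilon>. Rl (Phi k \<epsilon>))" for X M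
    using gtilde_eq_Rl_Phi less.prems
    by (auto intro!: bounded_family_cong vanishing_family_cong)
  then show ?case
    using less.prems Phi_bounded[of 1]
    by (auto intro!: bounded_in_Rl vanishing_in_Rl Phi_bounded Phi_vanishing)
qed

lemma gtil_eq_gtilde:
  "gtil scale (\<lambda>\<epsilon>. scale (inverse (\<nu> (heps \<epsilon>))) (heps \<epsilon>)) (gcoef scale Ls \<nu> (\<lambda>f. Rl (f - scale (\<nu> f) h)) h)
   = gtilde"
  by (simp add: gtilde_def geps_def[abs_def] gk_def S_def[abs_def])

end

theorem mainTheorem6:
  fixes scale :: "'k::real_normed_field \<Rightarrow> 'v::ab_group_add \<Rightarrow> 'v"
    and n :: nat
    and B :: "nat \<Rightarrow> 'v set" and N :: "nat \<Rightarrow> 'v \<Rightarrow> real"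
    and Ls :: "nat \<Rightarrow> 'v \<Rightarrow> 'v" and Leps :: "real \<Rightarrow> 'v \<Rightarrow> 'v"
    and lam :: 'k and h :: 'v and \<nu> :: "'v \<Rightarrow> 'k"
    and D0 :: "'v set" and Rl :: "'v \<Rightarrow> 'v"
    and lameps :: "real \<Rightarrow> 'k" and heps :: "real \<Rightarrow> 'v"
  assumes vs: "vector_space scale"
    \<comment> \<open>nested linear subspaces B^0 \<supseteq> ... \<supseteq> B^(n+1); (a) each is a Banach space\<close>
    and nested: "\<forall>k\<le>n. B (Suc k) \<subseteq> B k"
    and banach: "\<forall>k\<le>Suc n. banach_on scale (B k) (N k)"
    \<comment> \<open>(I)\<close>
    and condI: "\<forall>j\<le>n. \<forall>i. j \<le> i \<and> i \<le> n \<longrightarrow>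
                  maps_into (B i) (B (i - j)) (Ls j) \<and> lin_on scale (B i) (Ls j)"
    \<comment> \<open>(II)\<close>
    and L_lin: "lin_on scale (B 0) (Ls 0)"
    and lam_nz: "lam \<noteq> 0"
    and h_in: "h \<in> B (Suc n)"
    and nu_lin: "lin_fun_on scale (B 0) \<nu>"
    and nu_eig: "\<forall>f\<in>B 0. \<nu> (Ls 0 f) = lam * \<nu> f"
    and h_eig: "Ls 0 h = scale lam h"
    and nu_h: "\<nu> h = 1"
    and D0_sub: "module.subspace scale D0"
    and D0_between: "B 1 \<subseteq> D0" "D0 \<subseteq> B 0"
    and Rl_sol: "\<forall>f\<in>D0. Rl f \<in> B 0 \<and>
                   (Ls 0 (Rl f) - scale lam (scale (\<nu> (Rl f)) h)) - scale lam (Rl f) = f"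
    and Rl_uniq: "\<forall>f\<in>D0. \<forall>g\<in>B 0.
                   (Ls 0 g - scale lam (scale (\<nu> g) h)) - scale lam g = f \<longrightarrow> g = Rl f"
    and Rl_inv: "\<forall>i. 1 \<le> i \<and> i \<le> Suc n \<longrightarrow> maps_into (B i) (B i) Rl"
    \<comment> \<open>(IV), with the perturbed operators linear on B^0\<close>
    and Leps_lin: "\<forall>\<epsilon>\<in>{0<..<1}. maps_into (B 0) (B 0) (Leps \<epsilon>) \<and> lin_on scale (B 0) (Leps \<epsilon>)"
    and heps_in: "\<forall>\<epsilon>\<in>{0<..<1}. heps \<epsilon> \<in> B (Suc n)"
    and heps_eig: "\<forall>\<epsilon>\<in>{0<..<1}. Leps \<epsilon> (heps \<epsilon>) = scale (lameps \<epsilon>) (heps \<epsilon>)"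
    and nu_heps: "\<forall>\<epsilon>\<in>{0<..<1}. \<nu> (heps \<epsilon>) \<noteq> 0"
    \<comment> \<open>(b)\<close>
    and nu_bdd: "\<exists>C. \<forall>x\<in>B 0. norm (\<nu> x) \<le> C * N 0 x"
    and Lj_bdd: "\<forall>j\<le>n. \<forall>i. j \<le> i \<and> i \<le> Suc n \<longrightarrow>
                   bounded_op (N i) (B i) (N (i - j)) (B (i - j)) (Ls j)"
    and Ltil_bdd: "\<forall>j\<le>n. \<forall>i. j \<le> i \<and> i \<le> Suc n \<longrightarrow>
                   (\<exists>C. \<forall>\<epsilon>\<in>{0<..<1}. maps_into (B i) (B (i - j)) (Ltil scale Leps Ls j \<epsilon>) \<and>
                        op_norm_le (N i) (B i) (N (i - j)) (Ltil scale Leps Ls j \<epsilon>) C)"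
    and g_bdd: "\<forall>i\<le>Suc n. \<exists>C. \<forall>\<epsilon>\<in>{0<..<1}.
                   N i (scale (inverse (\<nu> (heps \<epsilon>))) (heps \<epsilon>)) \<le> C"
    and Rl_bdd10: "bounded_op (N 1) (B 1) (N 0) (B 0) Rl"
    and Rl_bdd: "\<forall>i. 1 \<le> i \<and> i \<le> Suc n \<longrightarrow> bounded_op (N i) (B i) (N i) (B i) Rl"
    and Rl_weak: "weak_bounded (N 0) (N 1) (B 1) Rl"
    \<comment> \<open>(c)\<close>
    and Ltil_lim: "\<forall>j\<le>n. \<forall>i. j \<le> i \<and> i \<le> n \<longrightarrow>
                   (\<forall>\<^sub>F \<epsilon> in at_right 0. maps_into (B (Suc i)) (B (i - j)) (Ltil scale Leps Ls j \<epsilon>)) \<and>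
                   (\<forall>\<eta>>0. \<forall>\<^sub>F \<epsilon> in at_right 0.
                        op_norm_le (N (Suc i)) (B (Suc i)) (N (i - j)) (Ltil scale Leps Ls j \<epsilon>) \<eta>)"
  shows "((\<lambda>\<epsilon>. N 0 (gtil scale (\<lambda>\<epsilon>. scale (inverse (\<nu> (heps \<epsilon>))) (heps \<epsilon>))
                       (gcoef scale Ls \<nu> (\<lambda>f. Rl (f - scale (\<nu> f) h)) h) n \<epsilon>))
            \<longlongrightarrow> 0) (at_right 0)
       \<and> (\<forall>k i. k + i \<le> n \<longrightarrow>
            ((\<lambda>\<epsilon>. N i (gtil scale (\<lambda>\<epsilon>. scale (inverse (\<nu> (heps \<epsilon>))) (heps \<epsilon>))
                       (gcoef scale Ls \<nu> (\<lambda>f. Rl (f - scale (\<nu> f) h)) h) k \<epsilon>))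
             \<longlongrightarrow> 0) (at_right 0))
       \<and> (\<forall>k\<le>n. \<exists>C. \<forall>\<epsilon>\<in>{0<..<1}.
            N (Suc n - k) (gtil scale (\<lambda>\<epsilon>. scale (inverse (\<nu> (heps \<epsilon>))) (heps \<epsilon>))
                       (gcoef scale Ls \<nu> (\<lambda>f. Rl (f - scale (\<nu> f) h)) h) k \<epsilon>) \<le> C)"
proof -
  have Ls_shifted: "bounded_op (N (i + j)) (B (i + j)) (N i) (B i) (Ls j)"
    if "j \<le> n" "i + j \<le> Suc n" for i j
    using that Lj_bdd[rule_format, of j "i + j"] by simp
  have Ltil_shifted: "unif_bounded_ops (N (i + j)) (B (i + j)) (N i) (B i) (Ltil scale Leps Ls j)"
    if "j \<le> n" "i + j \<le> Suc n" for i j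
    using that Ltil_bdd[rule_format, of j "i + j"] by (simp add: unif_bounded_ops_def)
  have Ltil_small: "\<forall>\<^sub>F \<epsilon> in at_right 0.
      op_norm_le (N (Suc (i + j))) (B (Suc (i + j))) (N i) (Ltil scale Leps Ls j \<epsilon>) \<eta>"
    if "j \<le> n" "i + j \<le> n" "\<eta> > 0" for i j \<eta>
    using that Ltil_lim[rule_format, of j "i + j"] by simp
  interpret p: eigenvector_perturbation scale n B N Ls Leps lam h \<nu> D0 Rl lameps heps
    by (intro eigenvector_perturbation.intro eigenvector_perturbation_axioms.intro)
      (use assms Ls_shifted Ltil_shifted Ltil_small in
        \<open>simp_all add: normed_field_vector_space_def banach_on_def normed_subspace_def\<close>)
  have "vanishing_family (B i) (N i) (p.gtilde k)" if "k + i \<le> n" for k i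
    using p.gtilde_estimates[of k] that by auto
  moreover have "bounded_family (B (Suc n - k)) (N (Suc n - k)) (p.gtilde k)" if "k \<le> n" for k
    using p.gtilde_estimates[of k] that by auto
  ultimately show ?thesis
    unfolding p.gtil_eq_gtilde vanishing_family_def bounded_family_def by auto
qed

end
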